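(* Let $P=\{(x,y)\in\mathbb{R}^{p+q}:Ax+Gy\le b\}$ be a nonempty rational polyhedron, let $c\in\mathbb{Q}^p$, $h\in\mathbb{Q}^q$ be such that $cx+hy$ is bounded above on $P$, and let $\gamma^*\in\mathbb{Q}$ be such that $cx+hy\le\gamma^*$ is valid for $P_I$ but not valid for $P$. With $Q$ and $\{v^r\}_{r\in R}$ as below, define for $r\in R$ $$d^r:=v^r_{1..m}A-v^r_{m+1}c,\qquad \delta^r:=\lceil v^r_{1..m}b-v^r_{m+1}\gamma^*\rceil,$$ for $r$ with $v^r_{m+1}>0$ put $\gamma^r:=\dfrac{\delta^r-v^r_{1..m}b}{-v^r_{m+1}}$, and let $\widehat\gamma:=\max\{\gamma^r:r\in R,\ v^r_{m+1}>0\}$ (this index set is nonempty). Then $cx+hy\le\widehat\gamma$ is a cutting plane for $P$, i.e. it is valid for $P_I$ and not valid for $P$.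
   Context: $A\in\mathbb{Q}^{m\times p}$, $G\in\mathbb{Q}^{m\times q}$, $b\in\mathbb{Q}^m$; $P_I=\mathrm{conv}\{(x,y)\in P:x\in\mathbb{Z}^p\}$. $Q=\{v=(v_{1..m},v_{m+1})\in\mathbb{R}^{m+1}: v_{1..m}G-v_{m+1}h=0,\ v\ge0\}$ (with $v_{1..m}$ a row vector in $\mathbb{R}^m$), and $\{v^r\}_{r\in R}$ ($R$ finite) contains exactly one representative of each extreme ray of $Q$, each scaled so that $v^r_{1..m}A-v^r_{m+1}c\in\mathbb{Z}^p$. *)

theory Defs
  imports "HOL-Analysis.Analysis"
begin

text \<open>Points of R^(p+q) are pairs (x,y) with x :: real^'p, y :: real^'q.
  Vectors in R^(m+1) are pairs (u,t) with u :: real^'m (= v_{1..m}) and t :: real (= v_{m+1}).\<close>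

definition polyP :: "real^'p^'m \<Rightarrow> real^'q^'m \<Rightarrow> real^'m \<Rightarrow> ((real^'p) \<times> (real^'q)) set" where
  "polyP A G b = {(x, y). \<forall>i. (A *v x + G *v y) $ i \<le> b $ i}"

definition integer_hull :: "((real^'p) \<times> (real^'q)) set \<Rightarrow> ((real^'p) \<times> (real^'q)) set" where
  "integer_hull S = convex hull {(x, y) \<in> S. \<forall>j. x $ j \<in> \<int>}"

definition valid_ineq :: "real^'p \<Rightarrow> real^'q \<Rightarrow> real \<Rightarrow> ((real^'p) \<times> (real^'q)) set \<Rightarrow> bool" where
  "valid_ineq c h \<gamma> S \<longleftrightarrow> (\<forall>(x, y) \<in> S. c \<bullet> x + h \<bullet> y \<le> \<gamma>)"

definition coneQ :: "real^'q^'m \<Rightarrow> real^'q \<Rightarrow> ((real^'m) \<times> real) set" where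
  "coneQ G h = {(u, t). u v* G - t *\<^sub>R h = 0 \<and> (\<forall>i. 0 \<le> u $ i) \<and> 0 \<le> t}"

definition ray :: "'a::real_vector \<Rightarrow> 'a set" where
  "ray w = {s *\<^sub>R w | s. 0 \<le> s}"

definition extreme_ray :: "'a::real_vector set \<Rightarrow> 'a set \<Rightarrow> bool" where
  "extreme_ray C S \<longleftrightarrow> (\<exists>w. w \<noteq> 0 \<and> S = ray w \<and> S face_of C)"

end

theory Submission
  imports Defs
begin

(* The cut  c x + h y \<le> \<gamma>hat  is obtained by projecting out the continuous variables y.
   For fixed x, the value  max {c x + h y : (x,y) \<in> P}  is at least \<gamma> exactly when every
   extreme ray v = (u,t) of the cone Q satisfies  (u A - t c) x \<le> u b - t \<gamma>.  This projection
   theorem follows from a Farkas alternative together with the fact that a pointed closed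
   convex cone is generated by its extreme rays (via Krein-Milman on a compact base). *)


subsection \<open>A Farkas alternative\<close>

lemma nonneg_combinations_convex_cone:
  fixes g :: "'i \<Rightarrow> 'a::real_vector"
  shows "convex_cone {\<Sum>i\<in>I. l i *\<^sub>R g i | l. \<forall>i\<in>I. 0 \<le> l i}"
  unfolding convex_cone_iff
proof (intro conjI ballI allI impI)
  show "0 \<in> {\<Sum>i\<in>I. l i *\<^sub>R g i | l. \<forall>i\<in>I. 0 \<le> l i}"
    by (intro CollectI exI[of _ "\<lambda>_. 0"]) simp
next
  fix x y assume "x \<in> {\<Sum>i\<in>I. l i *\<^sub>R g i | l. \<forall>i\<in>I. 0 \<le> l i}"
    and "y \<in> {\<Sum>i\<in>I. l i *\<^sub>R g i | l. \<forall>i\<in>I. 0 \<le> l i}"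
  then obtain l l' where "x = (\<Sum>i\<in>I. l i *\<^sub>R g i)" "\<forall>i\<in>I. 0 \<le> l i"
    and "y = (\<Sum>i\<in>I. l' i *\<^sub>R g i)" "\<forall>i\<in>I. 0 \<le> l' i" by blast
  then show "x + y \<in> {\<Sum>i\<in>I. l i *\<^sub>R g i | l. \<forall>i\<in>I. 0 \<le> l i}"
    by (intro CollectI exI[of _ "\<lambda>i. l i + l' i"]) (simp add: scaleR_add_left sum.distrib)
next
  fix x and s :: real assume "x \<in> {\<Sum>i\<in>I. l i *\<^sub>R g i | l. \<forall>i\<in>I. 0 \<le> l i}" and "0 \<le> s"
  then obtain l where "x = (\<Sum>i\<in>I. l i *\<^sub>R g i)" "\<forall>i\<in>I. 0 \<le> l i" by blast
  with \<open>0 \<le> s\<close> show "s *\<^sub>R x \<in> {\<Sum>i\<in>I. l i *\<^sub>R g i | l. \<forall>i\<in>I. 0 \<le> l i}"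
    by (intro CollectI exI[of _ "\<lambda>i. s * l i"]) (simp add: scaleR_sum_right)
qed

lemma convex_cone_hull_nonneg_combination:
  fixes g :: "'i \<Rightarrow> 'a::real_vector"
  assumes "finite I" and "z \<in> convex_cone hull (g ` I)"
  obtains l where "\<forall>i\<in>I. 0 \<le> l i" and "z = (\<Sum>i\<in>I. l i *\<^sub>R g i)"
proof -
  have "g j \<in> {\<Sum>i\<in>I. l i *\<^sub>R g i | l. \<forall>i\<in>I. 0 \<le> l i}" if "j \<in> I" for j
  proof -
    have "(\<Sum>i\<in>I. (if i = j then 1 else 0) *\<^sub>R g i) = g j"
      using that assms(1) by (simp add: if_distrib[of "\<lambda>s. s *\<^sub>R _"] cong: if_cong)
    then show ?thesis by (intro CollectI exI[of _ "\<lambda>i. if i = j then 1 else 0"]) auto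
  qed
  then have "convex_cone hull (g ` I) \<subseteq> {\<Sum>i\<in>I. l i *\<^sub>R g i | l. \<forall>i\<in>I. 0 \<le> l i}"
    by (intro hull_minimal nonneg_combinations_convex_cone) blast
  with assms(2) that show thesis by blast
qed

lemma conic_separation_nonneg:
  fixes w :: "'a::real_inner"
  assumes "conic K" and above: "\<forall>z\<in>K. \<beta> < inner w z" and "x \<in> K"
  shows "0 \<le> inner w x"
proof (rule ccontr)
  assume "\<not> 0 \<le> inner w x"
  then have neg: "inner w x < 0" by simp
  moreover have "\<beta> < 0" using above \<open>x \<in> K\<close> neg by fastforce
  ultimately have "0 \<le> \<beta> / inner w x" by (simp add: divide_nonpos_neg)
  then have "(\<beta> / inner w x) *\<^sub>R x \<in> K" using conicD[OF \<open>conic K\<close> \<open>x \<in> K\<close>] by blast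
  with above have "\<beta> < inner w ((\<beta> / inner w x) *\<^sub>R x)" by blast
  with neg show False by simp
qed

lemma farkas_alternative:
  fixes a :: "'i \<Rightarrow> 'a::euclidean_space" and \<beta> :: "'i \<Rightarrow> real"
  assumes "finite I" and infeasible: "\<nexists>y. \<forall>i\<in>I. a i \<bullet> y \<le> \<beta> i"
  obtains l where "\<forall>i\<in>I. 0 \<le> l i" and "(\<Sum>i\<in>I. l i *\<^sub>R a i) = 0"
    and "(\<Sum>i\<in>I. l i * \<beta> i) < 0"
proof -
  define g where "g i = (a i, \<beta> i)" for i
  define K where "K = convex_cone hull (g ` I)"
  show thesis
  proof (cases "(0, -1) \<in> K")
    case True
    then obtain l where l: "\<forall>i\<in>I. 0 \<le> l i" and eq: "(0, -1) = (\<Sum>i\<in>I. l i *\<^sub>R g i)"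
      using convex_cone_hull_nonneg_combination[OF \<open>finite I\<close>] unfolding K_def by metis
    have "(\<Sum>i\<in>I. l i *\<^sub>R a i) = 0" using arg_cong[OF eq, of fst] by (simp add: fst_sum g_def)
    moreover have "(\<Sum>i\<in>I. l i * \<beta> i) = -1" using arg_cong[OF eq, of snd] by (simp add: snd_sum g_def)
    ultimately show thesis using l that by simp
  next
    case False
    have "closed K" unfolding K_def using \<open>finite I\<close> by (simp add: closed_convex_cone_hull)
    then obtain w \<beta>0 where below: "inner w (0, -1) < \<beta>0" and above: "\<forall>z\<in>K. \<beta>0 < inner w z"
      using separating_hyperplane_closed_point[OF _ _ False] unfolding K_def
      by (metis convex_convex_cone_hull)
    obtain w1 s where w: "w = (w1, s)" by (cases w)
    have "\<beta>0 < 0" using above convex_cone_hull_contains_0 unfolding K_def by fastforce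
    with below w have "0 < s" by simp
    have "0 \<le> inner w (g i)" if "i \<in> I" for i
      using conic_separation_nonneg[OF _ above] that unfolding K_def
      by (simp add: conic_convex_cone_hull hull_inc)
    then have "\<forall>i\<in>I. a i \<bullet> (- (1 / s) *\<^sub>R w1) \<le> \<beta> i"
      using \<open>0 < s\<close> by (fastforce simp: g_def w field_simps inner_commute)
    with infeasible show thesis by blast
  qed
qed


subsection \<open>Extreme rays of pointed cones\<close>

lemma ray_mem: "0 \<le> s \<Longrightarrow> s *\<^sub>R w \<in> ray w"
  unfolding ray_def by blast

lemma ray_conic: "conic (ray w)"
  unfolding conic_def ray_def by (auto intro!: exI[where x = "_ * _"])

lemma ray_convex: "convex (ray w)"
proof -
  have "ray w = (\<lambda>s. s *\<^sub>R w) ` {0..}" unfolding ray_def by auto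
  then show ?thesis
    by (simp add: convex_linear_image bounded_linear.linear[OF bounded_linear_scaleR_left])
qed

lemma extreme_ray_generator_mem:
  assumes "extreme_ray C (ray z)"
  shows "z \<in> C"
  using assms ray_mem[of 1 z] face_of_imp_subset unfolding extreme_ray_def by fastforce

lemma extreme_point_convex_comb:
  assumes "e extreme_point_of S" "a \<in> S" "b \<in> S" "0 < \<mu>" "\<mu> < 1"
    and e: "e = (1 - \<mu>) *\<^sub>R a + \<mu> *\<^sub>R b"
  shows "a = e"
proof (cases "a = b")
  case True
  then show ?thesis using e by (simp add: scaleR_add_left[symmetric])
next
  case False
  then have "e \<in> open_segment a b" using assms(4,5) e unfolding in_segment(2) by blast
  with assms(1-3) show ?thesis unfolding extreme_point_of_def by blast
qed

text \<open>In the following, the cone C is pointed in the quantitative sense that the linear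
  functional  z \<mapsto> e0 \<bullet> z  dominates the norm on C; then  C \<inter> {e0 \<bullet> z = 1}  is a compact base.\<close>

lemma pointed_cone_normalize:
  assumes "conic C" and pointed: "\<forall>z\<in>C. norm z \<le> inner e0 z" and "z \<in> C" "z \<noteq> 0"
  shows "0 < inner e0 z" and "(1 / inner e0 z) *\<^sub>R z \<in> C \<inter> {z. inner e0 z = 1}"
proof -
  show pos: "0 < inner e0 z" using pointed \<open>z \<in> C\<close> \<open>z \<noteq> 0\<close> by (meson zero_less_norm_iff order_less_le_trans)
  show "(1 / inner e0 z) *\<^sub>R z \<in> C \<inter> {z. inner e0 z = 1}"
    using conicD[OF \<open>conic C\<close> \<open>z \<in> C\<close>, of "1 / inner e0 z"] pos by simp
qed

text \<open>The key step: an extreme point e of the base spans a face of C.  If a point of the ray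
  lies strictly between a and b, then a is on the ray (b follows by symmetry).\<close>

lemma base_extreme_point_ray_face_aux:
  assumes "conic C" and pointed: "\<forall>z\<in>C. norm z \<le> inner e0 z"
    and e: "e extreme_point_of (C \<inter> {z. inner e0 z = 1})"
    and "a \<in> C" "b \<in> C" "x \<in> ray e" "x \<in> open_segment a b"
  shows "a \<in> ray e"
proof -
  obtain l where l: "0 < l" "l < 1" and x: "x = (1 - l) *\<^sub>R a + l *\<^sub>R b"
    using \<open>x \<in> open_segment a b\<close> unfolding in_segment(2) by blast
  have e1: "inner e0 e = 1" using e unfolding extreme_point_of_def by simp
  consider "a = 0" | "a \<noteq> 0" "b = 0" | "a \<noteq> 0" "b \<noteq> 0" by blast
  then show ?thesis
  proof cases
    case 1
    then show ?thesis using ray_mem[of 0 e] by simp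
  next
    case 2
    then have "a = (1 / (1 - l)) *\<^sub>R x" using x l by simp
    then show ?thesis using conicD[OF ray_conic \<open>x \<in> ray e\<close>] l by simp
  next
    case 3
    define \<alpha> \<beta> where "\<alpha> = inner e0 a" and "\<beta> = inner e0 b"
    note norm_a = pointed_cone_normalize[OF \<open>conic C\<close> pointed \<open>a \<in> C\<close> \<open>a \<noteq> 0\<close>, folded \<alpha>_def]
    note norm_b = pointed_cone_normalize[OF \<open>conic C\<close> pointed \<open>b \<in> C\<close> \<open>b \<noteq> 0\<close>, folded \<beta>_def]
    define s where "s = (1 - l) * \<alpha> + l * \<beta>"
    have s: "0 < s" unfolding s_def using norm_a(1) norm_b(1) l by (simp add: add_pos_pos)
    obtain t where "0 \<le> t" "x = t *\<^sub>R e" using \<open>x \<in> ray e\<close> unfolding ray_def by blast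
    moreover have "inner e0 x = s" unfolding x s_def \<alpha>_def \<beta>_def by (simp add: inner_add_right)
    ultimately have xe: "x = s *\<^sub>R e" using e1 by simp
    define \<mu> where "\<mu> = l * \<beta> / s"
    have \<mu>: "0 < \<mu>" "\<mu> < 1"
      using s l norm_a(1) norm_b(1) unfolding \<mu>_def s_def by (auto simp: field_simps)
    have "1 - \<mu> = (s - l * \<beta>) / s" using s unfolding \<mu>_def by (simp add: diff_divide_distrib)
    also have "s - l * \<beta> = (1 - l) * \<alpha>" unfolding s_def by simp
    finally have "(1 - \<mu>) * (1 / \<alpha>) = (1 - l) / s" "\<mu> * (1 / \<beta>) = l / s"
      using norm_a(1) norm_b(1) unfolding \<mu>_def by auto
    then have "(1 - \<mu>) *\<^sub>R ((1 / \<alpha>) *\<^sub>R a) + \<mu> *\<^sub>R ((1 / \<beta>) *\<^sub>R b) = (1 / s) *\<^sub>R x"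
      unfolding x by (simp add: scaleR_add_right)
    also have "\<dots> = e" using xe s by simp
    finally have "(1 / \<alpha>) *\<^sub>R a = e"
      using extreme_point_convex_comb[OF e norm_a(2) norm_b(2) \<mu>] by simp
    then have "a = \<alpha> *\<^sub>R e" using norm_a(1) by auto
    then show ?thesis using ray_mem[of \<alpha> e] norm_a(1) by simp
  qed
qed

lemma base_extreme_point_ray_face:
  assumes "conic C" and pointed: "\<forall>z\<in>C. norm z \<le> inner e0 z"
    and e: "e extreme_point_of (C \<inter> {z. inner e0 z = 1})"
  shows "extreme_ray C (ray e)"
proof -
  have "e \<in> C" "e \<noteq> 0" using e unfolding extreme_point_of_def by auto
  then have "ray e \<subseteq> C" using conicD[OF \<open>conic C\<close>] unfolding ray_def by blast
  moreover have "a \<in> ray e \<and> b \<in> ray e"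
    if "a \<in> C" "b \<in> C" "x \<in> ray e" "x \<in> open_segment a b" for a b x
    using base_extreme_point_ray_face_aux[OF assms] that open_segment_commute by blast
  ultimately have "ray e face_of C" unfolding face_of_def using ray_convex by blast
  with \<open>e \<noteq> 0\<close> show ?thesis unfolding extreme_ray_def by blast
qed

text \<open>A pointed closed convex cone is generated by its extreme rays; in dual form: a
  linear functional that is negative somewhere on the cone is negative on an extreme ray.\<close>

lemma pointed_cone_extreme_ray_negative:
  fixes C :: "'a::euclidean_space set"
  assumes "conic C" "convex C" "closed C" and pointed: "\<forall>z\<in>C. norm z \<le> inner e0 z"
    and "q \<in> C" "inner w q < 0"
  obtains e where "extreme_ray C (ray e)" and "inner w e < 0"
proof -
  define S where "S = C \<inter> {z. inner e0 z = 1}"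
  have "compact S"
  proof -
    have "bounded S" unfolding bounded_iff S_def using pointed by (intro exI[of _ 1]) auto
    moreover have "closed S" unfolding S_def using \<open>closed C\<close> by (simp add: closed_Int closed_hyperplane)
    ultimately show ?thesis by (simp add: compact_eq_bounded_closed)
  qed
  moreover have "convex S" unfolding S_def using \<open>convex C\<close> by (simp add: convex_Int convex_hyperplane)
  ultimately have S_hull: "S = convex hull {x. x extreme_point_of S}" by (rule Krein_Milman_Minkowski)
  have "q \<noteq> 0" using \<open>inner w q < 0\<close> by auto
  note q' = pointed_cone_normalize[OF \<open>conic C\<close> pointed \<open>q \<in> C\<close> this]
  moreover have "inner w ((1 / inner e0 q) *\<^sub>R q) < 0"
    using q'(1) \<open>inner w q < 0\<close> by (simp add: divide_neg_pos)
  ultimately have "\<not> S \<subseteq> {z. 0 \<le> inner w z}" unfolding S_def by force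
  then obtain e where "e extreme_point_of S" "inner w e < 0"
    using hull_minimal[of "{x. x extreme_point_of S}" "{z. 0 \<le> inner w z}" convex] S_hull
    by (force simp: convex_halfspace_ge)
  then show thesis using that base_extreme_point_ray_face[OF \<open>conic C\<close> pointed] unfolding S_def by blast
qed


lemma coneQ_convex_cone: "convex_cone (coneQ G h)"
  unfolding convex_cone_iff
proof (intro conjI ballI allI impI)
  show "0 \<in> coneQ G h" unfolding coneQ_def by (simp add: zero_prod_def)
next
  fix z z' assume "z \<in> coneQ G h" "z' \<in> coneQ G h"
  then show "z + z' \<in> coneQ G h"
    unfolding coneQ_def by (auto simp: vector_matrix_left_distrib scaleR_add_left)
next
  fix z and s :: real assume "z \<in> coneQ G h" "0 \<le> s"
  then show "s *\<^sub>R z \<in> coneQ G h"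
    unfolding coneQ_def by (auto simp: scaleR_vector_matrix_assoc)
qed

lemma coneQ_closed: "closed (coneQ G h)"
proof -
  have "continuous_on UNIV (\<lambda>u. u v* G)"
    by (simp add: vector_matrix_mult_def continuous_intros continuous_on_vec_lambda)
  moreover have "coneQ G h = {z. fst z v* G - snd z *\<^sub>R h = 0} \<inter> (\<Inter>i. {z. 0 \<le> fst z $ i}) \<inter> {z. 0 \<le> snd z}"
    unfolding coneQ_def by auto
  ultimately show ?thesis
    by (auto intro!: closed_Int closed_INT closed_Collect_eq closed_Collect_le continuous_intros
             intro: continuous_on_compose2[of UNIV "\<lambda>u. u v* G"])
qed

lemma coneQ_snd_nonneg: "z \<in> coneQ G h \<Longrightarrow> 0 \<le> snd z"
  unfolding coneQ_def by auto

lemma coneQ_pointed: "\<forall>z\<in>coneQ G h. norm z \<le> inner ((\<chi> i. 1) :: real^'m, 1 :: real) z"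
proof
  fix z :: "(real^'m) \<times> real" assume "z \<in> coneQ G h"
  then obtain u t where z: "z = (u, t)" and u: "\<forall>i. 0 \<le> u $ i" and t: "0 \<le> t"
    unfolding coneQ_def by auto
  have "norm z \<le> norm u + norm t" unfolding z by (rule norm_Pair_le)
  also have "norm u \<le> (\<Sum>i\<in>UNIV. \<bar>u $ i\<bar>)" by (rule norm_le_l1_cart)
  also have "(\<Sum>i\<in>UNIV. \<bar>u $ i\<bar>) = (\<Sum>i\<in>UNIV. u $ i)" using u by simp
  finally show "norm z \<le> inner ((\<chi> i. 1) :: real^'m, 1 :: real) z"
    unfolding z using t by (simp add: inner_vec_def)
qed


subsection \<open>Weak duality and the projection theorem\<close>

lemma weak_duality:
  assumes "(x, y) \<in> polyP A G b" and "(u, t) \<in> coneQ G h"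
  shows "(u v* A - t *\<^sub>R c) \<bullet> x \<le> u \<bullet> b - t * (c \<bullet> x + h \<bullet> y)"
proof -
  have le: "\<forall>i. (A *v x + G *v y) $ i \<le> b $ i" using assms(1) unfolding polyP_def by auto
  have u: "\<forall>i. 0 \<le> u $ i" and uG: "u v* G = t *\<^sub>R h" using assms(2) unfolding coneQ_def by auto
  have "u \<bullet> (A *v x + G *v y) \<le> u \<bullet> b" unfolding inner_vec_def inner_real_def
    using le u by (intro sum_mono mult_left_mono) auto
  moreover have "u \<bullet> (A *v x) = (u v* A) \<bullet> x" by (simp add: dot_lmul_matrix)
  moreover have "u \<bullet> (G *v y) = t * (h \<bullet> y)" using uG dot_lmul_matrix[of u G y, symmetric] by simp
  ultimately show ?thesis by (simp add: inner_add_right inner_diff_left algebra_simps)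
qed

text \<open>Splitting a sum over an option type; the extra index None carries the objective row.\<close>

lemma sum_option_UNIV:
  fixes f :: "'a::finite option \<Rightarrow> 'b::comm_monoid_add"
  shows "(\<Sum>k\<in>UNIV. f k) = f None + (\<Sum>i\<in>UNIV. f (Some i))"
  by (simp add: UNIV_option_conv sum.reindex)

text \<open>Projection theorem: if all extreme-ray inequalities hold at x0 for the level \<gamma>, some
  y completes x0 to a point of P with objective value at least \<gamma>.  Otherwise the system
  G y \<le> b - A x0, -h y \<le> c x0 - \<gamma> is infeasible, and Farkas yields a point of Q on which
  the functional w = (b - A x0, c x0 - \<gamma>) is negative; then w is negative on an extreme
  ray of Q as well, which means that this ray's inequality fails at x0.\<close>

lemma projection_by_extreme_rays:
  fixes A :: "real^'p^'m" and G :: "real^'q^'m" and v :: "'r \<Rightarrow> (real^'m) \<times> real"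
  assumes all_rays: "\<forall>S. extreme_ray (coneQ G h) S \<longrightarrow> (\<exists>r \<in> R. S = ray (v r))"
    and ray_ineqs: "\<forall>r\<in>R. (fst (v r) v* A - snd (v r) *\<^sub>R c) \<bullet> x0 \<le> fst (v r) \<bullet> b - snd (v r) * \<gamma>"
  shows "\<exists>y. (x0, y) \<in> polyP A G b \<and> \<gamma> \<le> c \<bullet> x0 + h \<bullet> y"
proof (rule ccontr)
  assume no_completion: "\<not> ?thesis"
  define a :: "'m option \<Rightarrow> real^'q" where "a k = (case k of Some i \<Rightarrow> G $ i | None \<Rightarrow> - h)" for k
  define \<beta> :: "'m option \<Rightarrow> real"
    where "\<beta> k = (case k of Some i \<Rightarrow> b $ i - (A *v x0) $ i | None \<Rightarrow> c \<bullet> x0 - \<gamma>)" for k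
  have "\<nexists>y. \<forall>k\<in>UNIV. a k \<bullet> y \<le> \<beta> k"
  proof
    assume "\<exists>y. \<forall>k\<in>UNIV. a k \<bullet> y \<le> \<beta> k"
    then obtain y where y: "\<And>k. a k \<bullet> y \<le> \<beta> k" by blast
    have "(A *v x0 + G *v y) $ i \<le> b $ i" for i
      using y[of "Some i"] unfolding a_def \<beta>_def by (simp add: matrix_vector_mul_component)
    then have "(x0, y) \<in> polyP A G b" unfolding polyP_def by simp
    moreover have "\<gamma> \<le> c \<bullet> x0 + h \<bullet> y" using y[of None] unfolding a_def \<beta>_def by simp
    ultimately show False using no_completion by blast
  qed
  then obtain l where l: "\<forall>k\<in>UNIV. 0 \<le> l k" and combination: "(\<Sum>k\<in>UNIV. l k *\<^sub>R a k) = 0"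
    and negative: "(\<Sum>k\<in>UNIV. l k * \<beta> k) < 0"
    using farkas_alternative[OF finite_class.finite_UNIV] by blast
  define u where "u = (\<chi> i. l (Some i))"
  have "u v* G = (\<Sum>i\<in>UNIV. u $ i *\<^sub>R G $ i)"
    by (simp add: vec_eq_iff vector_matrix_mult_def mult.commute)
  then have "(u, l None) \<in> coneQ G h"
    using combination l unfolding coneQ_def sum_option_UNIV u_def a_def by simp
  moreover define w where "w = (b - A *v x0, c \<bullet> x0 - \<gamma>)"
  moreover have "inner w (u, l None) < 0" using negative
    unfolding w_def sum_option_UNIV u_def \<beta>_def by (simp add: inner_vec_def mult.commute)
  ultimately obtain e where "extreme_ray (coneQ G h) (ray e)" and "inner w e < 0"
    using pointed_cone_extreme_ray_negative[OF _ _ coneQ_closed coneQ_pointed]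
      coneQ_convex_cone unfolding convex_cone_def by blast
  then obtain r where "r \<in> R" and "ray e = ray (v r)" using all_rays by blast
  then obtain s where "0 \<le> s" "e = s *\<^sub>R v r" using ray_mem[of 1 e] unfolding ray_def by auto
  with \<open>inner w e < 0\<close> have "inner w (v r) < 0"
    using mult_nonneg_nonneg[of s "inner w (v r)"] by fastforce
  moreover obtain u' t' where v: "v r = (u', t')" by (cases "v r")
  moreover have "(u' v* A) \<bullet> x0 = u' \<bullet> (A *v x0)" by (simp add: dot_lmul_matrix)
  ultimately have "(u' v* A - t' *\<^sub>R c) \<bullet> x0 > u' \<bullet> b - t' * \<gamma>"
    unfolding w_def by (simp add: inner_diff_left inner_diff_right inner_commute algebra_simps)
  then show False using ray_ineqs \<open>r \<in> R\<close> v by fastforce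
qed

text \<open>Strict version, used twice: if the ray inequalities with t > 0 hold strictly at a
  feasible x0 (those with t = 0 hold anyway by weak duality), then the objective exceeds \<gamma>
  on the fibre of x0.  The level is raised to the least slack ratio, capped at \<gamma> + 1 so that
  the argument also covers the case where no ray has t > 0.\<close>

lemma fibre_value_exceeds:
  fixes A :: "real^'p^'m" and G :: "real^'q^'m" and v :: "'r \<Rightarrow> (real^'m) \<times> real"
  assumes "finite R"
    and all_rays: "\<forall>S. extreme_ray (coneQ G h) S \<longrightarrow> (\<exists>r \<in> R. S = ray (v r))"
    and in_Q: "\<forall>r\<in>R. v r \<in> coneQ G h" and feasible: "(x0, y0) \<in> polyP A G b"
    and strict: "\<forall>r\<in>R. 0 < snd (v r) \<longrightarrow>
                   (fst (v r) v* A - snd (v r) *\<^sub>R c) \<bullet> x0 < fst (v r) \<bullet> b - snd (v r) * \<gamma>"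
  shows "\<exists>y. (x0, y) \<in> polyP A G b \<and> \<gamma> < c \<bullet> x0 + h \<bullet> y"
proof -
  define d where "d r = (fst (v r) v* A - snd (v r) *\<^sub>R c) \<bullet> x0" for r
  define ratio where "ratio r = (fst (v r) \<bullet> b - d r) / snd (v r)" for r
  define \<gamma>' where "\<gamma>' = Min (insert (\<gamma> + 1) (ratio ` {r \<in> R. 0 < snd (v r)}))"
  have "\<gamma> < \<gamma>'" unfolding \<gamma>'_def ratio_def d_def
    using \<open>finite R\<close> strict by (auto simp: Min_gr_iff less_divide_eq algebra_simps)
  moreover have "d r \<le> fst (v r) \<bullet> b - snd (v r) * \<gamma>'" if "r \<in> R" for r
  proof (cases "0 < snd (v r)")
    case True
    then have "\<gamma>' \<le> ratio r" unfolding \<gamma>'_def using \<open>finite R\<close> \<open>r \<in> R\<close> by simp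
    with True show ?thesis unfolding ratio_def by (simp add: le_divide_eq algebra_simps)
  next
    case False
    have "(fst (v r), snd (v r)) \<in> coneQ G h" using in_Q \<open>r \<in> R\<close> by simp
    moreover from this False have "snd (v r) = 0" using coneQ_snd_nonneg by fastforce
    ultimately show ?thesis using weak_duality[OF feasible, of "fst (v r)" "snd (v r)" h c]
      unfolding d_def by simp
  qed
  then obtain y where "(x0, y) \<in> polyP A G b" "\<gamma>' \<le> c \<bullet> x0 + h \<bullet> y"
    using projection_by_extreme_rays[OF all_rays] unfolding d_def by blast
  ultimately show ?thesis by force
qed


subsection \<open>Rounding the ray inequalities\<close>

lemma rounded_level_le:
  fixes \<beta> t \<gamma> :: real
  assumes "0 < t"
  shows "(\<beta> - of_int \<lceil>\<beta> - t * \<gamma>\<rceil>) / t \<le> \<gamma>"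
proof -
  have "\<beta> - of_int \<lceil>\<beta> - t * \<gamma>\<rceil> \<le> t * \<gamma>" using le_of_int_ceiling[of "\<beta> - t * \<gamma>"] by linarith
  then show ?thesis using assms by (simp add: divide_le_eq mult.commute)
qed

lemma rounded_level_strict:
  fixes d \<beta> t z \<gamma> :: real
  assumes "d \<in> \<int>" "0 < t" and dual: "d \<le> \<beta> - t * z"
    and above: "(\<beta> - of_int \<lceil>\<beta> - t * \<gamma>\<rceil>) / t < z"
  shows "d < \<beta> - t * \<gamma>"
proof -
  obtain k where k: "d = of_int k" using \<open>d \<in> \<int>\<close> by (auto elim: Ints_cases)
  have "\<beta> - of_int \<lceil>\<beta> - t * \<gamma>\<rceil> < t * z" using above \<open>0 < t\<close> by (simp add: divide_less_eq mult.commute)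
  with dual k have "k < \<lceil>\<beta> - t * \<gamma>\<rceil>" by linarith
  with k show ?thesis by (simp add: less_ceiling_iff)
qed


lemma valid_ineq_mono:
  "valid_ineq c h \<gamma> S \<Longrightarrow> \<gamma> \<le> \<gamma>' \<Longrightarrow> valid_ineq c h \<gamma>' S"
  unfolding valid_ineq_def by fastforce

lemma positive_ray_exists:
  fixes A :: "real^'p^'m" and G :: "real^'q^'m" and v :: "'r \<Rightarrow> (real^'m) \<times> real"
  assumes "finite R"
    and all_rays: "\<forall>S. extreme_ray (coneQ G h) S \<longrightarrow> (\<exists>r \<in> R. S = ray (v r))"
    and in_Q: "\<forall>r\<in>R. v r \<in> coneQ G h"
    and "polyP A G b \<noteq> {}" and bounded: "\<exists>M. \<forall>(x, y) \<in> polyP A G b. c \<bullet> x + h \<bullet> y \<le> M"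
  shows "\<exists>r\<in>R. 0 < snd (v r)"
proof (rule ccontr)
  assume no_positive: "\<not> (\<exists>r\<in>R. 0 < snd (v r))"
  obtain M where M: "\<forall>(x, y) \<in> polyP A G b. c \<bullet> x + h \<bullet> y \<le> M" using bounded by blast
  obtain x0 y0 where feasible: "(x0, y0) \<in> polyP A G b" using \<open>polyP A G b \<noteq> {}\<close> by auto
  obtain y where "(x0, y) \<in> polyP A G b" "M < c \<bullet> x0 + h \<bullet> y"
    using fibre_value_exceeds[OF \<open>finite R\<close> all_rays in_Q feasible, where \<gamma> = M] no_positive by blast
  with M show False by fastforce
qed

text \<open>Validity on the mixed-integer hull: a mixed-integer point violating the cut would satisfy
  all rounded ray inequalities strictly, so its fibre would contain a point, again
  mixed-integer, beating \<gamma>*.\<close>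

lemma cut_valid_integer_hull:
  fixes A :: "real^'p^'m" and G :: "real^'q^'m" and v :: "'r \<Rightarrow> (real^'m) \<times> real"
  assumes "finite R"
    and all_rays: "\<forall>S. extreme_ray (coneQ G h) S \<longrightarrow> (\<exists>r \<in> R. S = ray (v r))"
    and in_Q: "\<forall>r\<in>R. v r \<in> coneQ G h"
    and scaled: "\<forall>r \<in> R. \<forall>j. (fst (v r) v* A - snd (v r) *\<^sub>R c) $ j \<in> \<int>"
    and valid_PI: "valid_ineq c h \<gamma>star (integer_hull (polyP A G b))"
    and levels: "\<forall>r\<in>R. 0 < snd (v r) \<longrightarrow>
       (fst (v r) \<bullet> b - of_int \<lceil>fst (v r) \<bullet> b - snd (v r) * \<gamma>star\<rceil>) / snd (v r) \<le> \<gamma>hat"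
  shows "valid_ineq c h \<gamma>hat (integer_hull (polyP A G b))"
proof -
  have "c \<bullet> x + h \<bullet> y \<le> \<gamma>hat" if xy: "(x, y) \<in> polyP A G b" and x: "\<forall>j. x $ j \<in> \<int>" for x y
  proof (rule ccontr)
    assume "\<not> c \<bullet> x + h \<bullet> y \<le> \<gamma>hat"
    have "(fst (v r) v* A - snd (v r) *\<^sub>R c) \<bullet> x < fst (v r) \<bullet> b - snd (v r) * \<gamma>star"
      if "r \<in> R" "0 < snd (v r)" for r
    proof (rule rounded_level_strict[OF _ \<open>0 < snd (v r)\<close>])
      show "(fst (v r) v* A - snd (v r) *\<^sub>R c) \<bullet> x \<in> \<int>" unfolding inner_vec_def
        using scaled x \<open>r \<in> R\<close> by (intro Ints_sum Ints_mult) (auto simp: inner_real_def)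
      show "(fst (v r) v* A - snd (v r) *\<^sub>R c) \<bullet> x \<le> fst (v r) \<bullet> b - snd (v r) * (c \<bullet> x + h \<bullet> y)"
        using weak_duality[OF xy] in_Q \<open>r \<in> R\<close> by (cases "v r") auto
      show "(fst (v r) \<bullet> b - of_int \<lceil>fst (v r) \<bullet> b - snd (v r) * \<gamma>star\<rceil>) / snd (v r) < c \<bullet> x + h \<bullet> y"
        using levels that \<open>\<not> c \<bullet> x + h \<bullet> y \<le> \<gamma>hat\<close> by force
    qed
    then obtain y' where "(x, y') \<in> polyP A G b" "\<gamma>star < c \<bullet> x + h \<bullet> y'"
      using fibre_value_exceeds[OF \<open>finite R\<close> all_rays in_Q xy] by blast
    moreover have "(x, y') \<in> integer_hull (polyP A G b)"
      using calculation(1) x unfolding integer_hull_def by (intro hull_inc) simp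
    ultimately show False using valid_PI unfolding valid_ineq_def by fastforce
  qed
  then have "integer_hull (polyP A G b) \<subseteq> {z. inner (c, h) z \<le> \<gamma>hat}"
    unfolding integer_hull_def by (intro hull_minimal) (auto simp: convex_halfspace_le)
  then show ?thesis unfolding valid_ineq_def by auto
qed

theorem theorem3p1:
  fixes A :: "real^'p^'m" and G :: "real^'q^'m" and b :: "real^'m"
    and c :: "real^'p" and h :: "real^'q" and \<gamma>star :: real
    and R :: "'r set" and v :: "'r \<Rightarrow> (real^'m) \<times> real"
  assumes rat_A: "\<forall>i j. A $ i $ j \<in> \<rat>" and rat_G: "\<forall>i j. G $ i $ j \<in> \<rat>"
    and rat_b: "\<forall>i. b $ i \<in> \<rat>" and rat_c: "\<forall>j. c $ j \<in> \<rat>" and rat_h: "\<forall>j. h $ j \<in> \<rat>"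
    and nonempty: "polyP A G b \<noteq> {}"
    and bounded: "\<exists>M. \<forall>(x, y) \<in> polyP A G b. c \<bullet> x + h \<bullet> y \<le> M"
    and rat_gamma: "\<gamma>star \<in> \<rat>"
    and valid_PI: "valid_ineq c h \<gamma>star (integer_hull (polyP A G b))"
    and not_valid_P: "\<not> valid_ineq c h \<gamma>star (polyP A G b)"
    and finR: "finite R"
    and rays: "\<forall>r \<in> R. extreme_ray (coneQ G h) (ray (v r))"
    and distinct_rays: "inj_on (\<lambda>r. ray (v r)) R"
    and all_rays: "\<forall>S. extreme_ray (coneQ G h) S \<longrightarrow> (\<exists>r \<in> R. S = ray (v r))"
    and scaled: "\<forall>r \<in> R. \<forall>j. (fst (v r) v* A - snd (v r) *\<^sub>R c) $ j \<in> \<int>"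
  shows "let \<delta> = (\<lambda>r. real_of_int \<lceil>fst (v r) \<bullet> b - snd (v r) * \<gamma>star\<rceil>);
             \<gamma> = (\<lambda>r. (\<delta> r - fst (v r) \<bullet> b) / (- snd (v r)));
             Rpos = {r \<in> R. 0 < snd (v r)};
             \<gamma>hat = Max (\<gamma> ` Rpos)
         in Rpos \<noteq> {} \<and> valid_ineq c h \<gamma>hat (integer_hull (polyP A G b))
            \<and> \<not> valid_ineq c h \<gamma>hat (polyP A G b)"
proof -
  (* level r is the paper's \<gamma>^r, written with a positive denominator *)
  define level where
    "level r = (fst (v r) \<bullet> b - of_int \<lceil>fst (v r) \<bullet> b - snd (v r) * \<gamma>star\<rceil>) / snd (v r)" for r
  define Rpos where "Rpos = {r \<in> R. 0 < snd (v r)}"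
  have "finite Rpos" unfolding Rpos_def using finR by simp
  have in_Q: "\<forall>r\<in>R. v r \<in> coneQ G h" using rays extreme_ray_generator_mem by blast
  have "Rpos \<noteq> {}"
    using positive_ray_exists[OF finR all_rays in_Q nonempty bounded] unfolding Rpos_def by blast
  have "\<forall>r\<in>R. 0 < snd (v r) \<longrightarrow> level r \<le> Max (level ` Rpos)"
    using \<open>finite Rpos\<close> unfolding Rpos_def by simp
  then have valid_hull: "valid_ineq c h (Max (level ` Rpos)) (integer_hull (polyP A G b))"
    unfolding level_def by (rule cut_valid_integer_hull[OF finR all_rays in_Q scaled valid_PI])
  have "Max (level ` Rpos) \<le> \<gamma>star"
    using \<open>finite Rpos\<close> \<open>Rpos \<noteq> {}\<close> rounded_level_le unfolding Rpos_def level_def by simp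
  then have invalid_P: "\<not> valid_ineq c h (Max (level ` Rpos)) (polyP A G b)"
    using not_valid_P valid_ineq_mono by blast
  have level_eq:
    "(\<lambda>r. (of_int \<lceil>fst (v r) \<bullet> b - snd (v r) * \<gamma>star\<rceil> - fst (v r) \<bullet> b) / - snd (v r)) = level"
    unfolding level_def by (simp add: fun_eq_iff minus_divide_left)
  show ?thesis
    using \<open>Rpos \<noteq> {}\<close> valid_hull invalid_P unfolding Let_def level_eq Rpos_def[symmetric] by blast
qed

end
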